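(* Let $\mathfrak{r}$ be a totally real subspace of $\mathfrak{g}_\alpha$ of dimension $r$, let $H$ be the connected Lie subgroup of $AN$ with Lie algebra $\mathfrak{a}\oplus\mathfrak{r}$, and let $W\in\mathfrak{g}_\alpha\ominus(\mathfrak{r}\oplus J\mathfrak{r})$, $y\in\mathbb{R}$. Then the mean curvature vector $\mathcal{H}$ and the second fundamental form $\mathrm{II}$ of the orbit $H\cdot\operatorname{Exp}(2W+yZ)(o)$ satisfy $$\lVert\mathcal{H}\rVert^2-\lVert\mathrm{II}\rVert^2=\frac{r(1+r)(y^2+\lVert W\rVert^2)}{4(1+y^2+\lVert W\rVert^2)},$$ $$(r+1)\lVert\mathrm{II}\rVert^2-\lVert\mathcal{H}\rVert^2=\frac{ry^2\bigl((3+2r)(1+y^2)+2(3+r)\lVert W\rVert^2\bigr)}{4(1+y^2+\lVert W\rVert^2)^2}.$$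
   Context: $\mathbb{C}H^n$ is the complex hyperbolic space of constant holomorphic sectional curvature $-1$; $G=SU(1,n)$, $o\in\mathbb{C}H^n$ fixed with stabilizer $K$, Cartan decomposition $\mathfrak{g}=\mathfrak{k}\oplus\mathfrak{p}$, $\mathfrak{a}\subset\mathfrak{p}$ maximal abelian ($1$-dimensional), restricted roots $\pm\alpha,\pm2\alpha$ with $\alpha,2\alpha$ positive, root spaces $\mathfrak{g}_\lambda$, $\mathfrak{n}=\mathfrak{g}_\alpha\oplus\mathfrak{g}_{2\alpha}$, $AN$ the connected subgroup with Lie algebra $\mathfrak{a}\oplus\mathfrak{n}$, acting simply transitively on $\mathbb{C}H^n$. $\mathfrak{a}\oplus\mathfrak{n}$ carries an inner product and complex structure $J$ (with $J\mathfrak{g}_\alpha=\mathfrak{g}_\alpha$, $J\mathfrak{a}=\mathfrak{g}_{2\alpha}$) making $AN$ with left-invariant metric holomorphically isometric to $\mathbb{C}H^n$; $B\in\mathfrak{a}$ is a unit vector and $Z=JB$. $\operatorname{Exp}$ is the Lie exponential of $AN$; $\ominus$ is orthogonal complement. A subspace $W\subset\mathfrak{g}_\alpha$ is totally real if $JW\perp W$. The mean curvature vector is the trace of $\mathrm{II}$. *)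

theory Defs
  imports "HOL-Analysis.Analysis"
begin

text \<open>
Model of the solvable Iwasawa group AN of SU(1,n), acting simply transitively on
complex hyperbolic space CH^n (holomorphic sectional curvature -1), through its
metric Lie algebra  s = a + g_alpha + g_2alpha = R B + V + R Z,  represented as
the product type real * V * real with the product inner product
<aB+U+xZ, bB+V+yZ> = ab + <U,V> + xy.  Here V = g_alpha is a real inner product
space with a Hermitian complex structure J (a parameter), and
[aB+U+xZ, bB+V+yZ] = -(b/2)U + (a/2)V + (<JU,V> - bx + ay) Z.
\<close>

type_synonym 'v san = "real \<times> 'v \<times> real"

definition is_hermitian_cs :: "('v::real_inner \<Rightarrow> 'v) \<Rightarrow> bool" where
  "is_hermitian_cs J \<longleftrightarrow> linear J \<and> (\<forall>u. J (J u) = - u) \<and> (\<forall>u v. J u \<bullet> J v = u \<bullet> v)"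

definition an_B :: "'v::real_vector san" where
  "an_B = (1, 0, 0)"

definition an_J :: "('v \<Rightarrow> 'v) \<Rightarrow> 'v::real_vector san \<Rightarrow> 'v san" where
  "an_J J X = (case X of (a, U, x) \<Rightarrow> (- x, J U, a))"

definition an_Z :: "('v::real_vector \<Rightarrow> 'v) \<Rightarrow> 'v san" where
  "an_Z J = an_J J an_B"

definition an_bracket :: "('v \<Rightarrow> 'v) \<Rightarrow> 'v::real_inner san \<Rightarrow> 'v san \<Rightarrow> 'v san" where
  "an_bracket J X Y = (case X of (a, U, x) \<Rightarrow> case Y of (b, V, y) \<Rightarrow>
      (0, (a / 2) *\<^sub>R V - (b / 2) *\<^sub>R U, (J U \<bullet> V) - b * x + a * y))"

text \<open>Levi-Civita connection of the left-invariant metric on left-invariant fields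
(Koszul formula), expanded in the orthonormal basis of s.\<close>
definition lc_conn :: "('v \<Rightarrow> 'v) \<Rightarrow> 'v::euclidean_space san \<Rightarrow> 'v san \<Rightarrow> 'v san" where
  "lc_conn J X Y = (\<Sum>E\<in>Basis. ((an_bracket J X Y \<bullet> E - an_bracket J Y E \<bullet> X
       + an_bracket J E X \<bullet> Y) / 2) *\<^sub>R E)"

text \<open>Ad(Exp(-xi)) = exp(- ad xi), as the exponential power series.\<close>
definition Ad_exp_neg :: "('v \<Rightarrow> 'v) \<Rightarrow> 'v::euclidean_space san \<Rightarrow> 'v san \<Rightarrow> 'v san" where
  "Ad_exp_neg J xi v = (\<Sum>k. (1 / fact k) *\<^sub>R (((\<lambda>u. - an_bracket J xi u) ^^ k) v))"

definition lie_a_plus :: "'v::real_vector set \<Rightarrow> 'v san set" where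
  "lie_a_plus R = {(a, U, 0) | a U. U \<in> R}"

text \<open>The orbit H . Exp(xi)(o) is mapped by the isometry of left translation by
Exp(xi)^(-1) onto the orbit through o of the conjugate subgroup
Exp(-xi) H Exp(xi), whose Lie algebra is Ad(Exp(-xi))(h).  Its tangent space at o
(identified with s) is therefore the following subspace.\<close>
definition orbit_tangent :: "('v \<Rightarrow> 'v) \<Rightarrow> 'v::euclidean_space san set \<Rightarrow> 'v san \<Rightarrow> 'v san set" where
  "orbit_tangent J h xi = Ad_exp_neg J xi ` h"

definition orthonormal_basis_of :: "'a::real_inner set \<Rightarrow> 'a set \<Rightarrow> bool" where
  "orthonormal_basis_of E S \<longleftrightarrow> finite E \<and> E \<subseteq> S \<and> span E = S \<and> pairwise orthogonal E
      \<and> (\<forall>e\<in>E. norm e = 1)"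

definition nproj :: "'a::real_inner set \<Rightarrow> 'a \<Rightarrow> 'a" where
  "nproj E v = v - (\<Sum>e\<in>E. (v \<bullet> e) *\<^sub>R e)"

text \<open>Second fundamental form of the orbit of a subgroup through o, on left-invariant
tangent fields: II(X,Y) = (nabla_X Y)^perp.\<close>
definition sff :: "('v \<Rightarrow> 'v) \<Rightarrow> 'v::euclidean_space san set \<Rightarrow> 'v san \<Rightarrow> 'v san \<Rightarrow> 'v san" where
  "sff J E X Y = nproj E (lc_conn J X Y)"

definition mean_curv :: "('v \<Rightarrow> 'v) \<Rightarrow> 'v::euclidean_space san set \<Rightarrow> 'v san" where
  "mean_curv J E = (\<Sum>e\<in>E. sff J E e e)"

definition sff_norm2 :: "('v \<Rightarrow> 'v) \<Rightarrow> 'v::euclidean_space san set \<Rightarrow> real" where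
  "sff_norm2 J E = (\<Sum>e\<in>E. \<Sum>e'\<in>E. (norm (sff J E e e'))\<^sup>2)"

end

theory Submission
  imports Defs
begin

text \<open>
  Left translation by \<open>Exp(\<xi>)\<^sup>-\<^sup>1\<close>, \<open>\<xi> = 2W + yZ\<close>, moves the orbit to the orbit through \<open>o\<close> of
  the conjugate subgroup, whose tangent space is \<open>Ad(Exp(-\<xi>))(\<aa> \<oplus> \<rr>)\<close>. Since \<open>ad \<xi>\<close> is
  nilpotent of order two on \<open>\<aa> \<oplus> \<rr>\<close>, this is \<open>{(b, U + bW, by) | U \<in> \<rr>}\<close>. It has the
  orthonormal frame consisting of \<open>t = (1, W, y) / \<surd>(1 + y\<^sup>2 + |W|\<^sup>2)\<close> and an orthonormal basis
  \<open>u\<^sub>1, \<dots>, u\<^sub>r\<close> of \<open>\<rr>\<close>. The Koszul formula gives the Levi-Civita connection of the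
  left-invariant metric in closed form, so the second fundamental form can be evaluated on this
  frame: only \<open>II(t,t)\<close>, \<open>II(u\<^sub>i,u\<^sub>i)\<close> and \<open>II(t,u\<^sub>i) = II(u\<^sub>i,t) = -(ay/2) Ju\<^sub>i\<close> survive,
  because \<open>\<rr>\<close> is totally real and \<open>W \<perp> \<rr> \<oplus> J\<rr>\<close>. As the mean curvature vector and \<open>|II|\<^sup>2\<close> do
  not depend on the orthonormal basis, both identities reduce to rational algebra in
  \<open>a\<^sup>2 = 1 / (1 + y\<^sup>2 + |W|\<^sup>2)\<close>.
\<close>

section \<open>Orthonormal bases of subspaces\<close>

lemma orthonormal_basis_of_inner:
  assumes "orthonormal_basis_of E S" "e \<in> E" "e' \<in> E"
  shows "e \<bullet> e' = (if e = e' then 1 else 0)"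
  using assms by (auto simp: orthonormal_basis_of_def pairwise_def orthogonal_def norm_eq_1)

lemma orthonormal_basis_of_expansion:
  assumes E: "orthonormal_basis_of E S" and x: "x \<in> S"
  shows "x = (\<Sum>e\<in>E. (x \<bullet> e) *\<^sub>R e)"
proof -
  have fin: "finite E" and sp: "span E = S" using E by (auto simp: orthonormal_basis_of_def)
  obtain u where xu: "x = (\<Sum>v\<in>E. u v *\<^sub>R v)" using x sp span_finite[OF fin] by auto
  have "x \<bullet> e = u e" if "e \<in> E" for e
  proof -
    have "x \<bullet> e = (\<Sum>v\<in>E. if v = e then u v else 0)"
      unfolding xu inner_sum_left
      by (rule sum.cong) (auto simp: orthonormal_basis_of_inner[OF E _ that])
    then show ?thesis using fin that by simp
  qed
  then show ?thesis using xu by simp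
qed

lemma orthonormal_basis_of_sum_inner:
  assumes "orthonormal_basis_of E S" "x \<in> S"
  shows "(\<Sum>e\<in>E. (v \<bullet> e) * (e \<bullet> x)) = v \<bullet> x"
  using arg_cong[OF orthonormal_basis_of_expansion[OF assms], of "inner v"]
  by (simp add: inner_sum_right inner_commute mult.commute)

lemma nproj_eq_0:
  assumes "orthonormal_basis_of E S" "x \<in> S"
  shows "nproj E x = 0"
  using orthonormal_basis_of_expansion[OF assms] by (simp add: nproj_def)

lemma linear_nproj: "finite E \<Longrightarrow> linear (nproj E)"
  unfolding nproj_def
  by (intro linearI) (simp_all add: inner_add_left scaleR_add_left sum.distrib
      scaleR_sum_right algebra_simps)

lemma nproj_basis_independent:
  assumes E: "orthonormal_basis_of E S" and F: "orthonormal_basis_of F S"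
  shows "nproj E = nproj F"
proof
  fix v
  have FS: "f \<in> S" if "f \<in> F" for f using F that by (auto simp: orthonormal_basis_of_def)
  have "(\<Sum>e\<in>E. (v \<bullet> e) *\<^sub>R e) = (\<Sum>e\<in>E. (v \<bullet> e) *\<^sub>R (\<Sum>f\<in>F. (e \<bullet> f) *\<^sub>R f))"
    using E F by (intro sum.cong refl) (metis orthonormal_basis_of_def orthonormal_basis_of_expansion subsetD)
  also have "\<dots> = (\<Sum>f\<in>F. (\<Sum>e\<in>E. (v \<bullet> e) * (e \<bullet> f)) *\<^sub>R f)"
    by (simp add: scaleR_sum_right scaleR_sum_left sum.swap[of _ E F])
  also have "\<dots> = (\<Sum>f\<in>F. (v \<bullet> f) *\<^sub>R f)"
    by (intro sum.cong refl) (simp add: orthonormal_basis_of_sum_inner[OF E FS])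
  finally show "nproj E v = nproj F v" by (simp add: nproj_def)
qed

lemma trace_basis_independent:
  assumes E: "orthonormal_basis_of E S" and F: "orthonormal_basis_of F S" and \<beta>: "bilinear \<beta>"
  shows "(\<Sum>e\<in>E. \<beta> e e) = (\<Sum>f\<in>F. \<beta> f f)"
proof -
  have finF: "finite F" and FS: "\<And>f. f \<in> F \<Longrightarrow> f \<in> S"
    using F by (auto simp: orthonormal_basis_of_def)
  have "\<beta> e e = (\<Sum>(f, f')\<in>F \<times> F. ((e \<bullet> f) * (e \<bullet> f')) *\<^sub>R \<beta> f f')" if "e \<in> E" for e
  proof -
    have "e = (\<Sum>f\<in>F. (e \<bullet> f) *\<^sub>R f)"
      using E F that by (metis orthonormal_basis_of_def orthonormal_basis_of_expansion subsetD)
    then have "\<beta> e e = \<beta> (\<Sum>f\<in>F. (e \<bullet> f) *\<^sub>R f) (\<Sum>f'\<in>F. (e \<bullet> f') *\<^sub>R f')" by simp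
    then show ?thesis
      by (simp add: bilinear_sum[OF \<beta>] bilinear_lmul[OF \<beta>] bilinear_rmul[OF \<beta>] mult.commute)
  qed
  then have "(\<Sum>e\<in>E. \<beta> e e) = (\<Sum>e\<in>E. \<Sum>(f, f')\<in>F \<times> F. ((e \<bullet> f) * (e \<bullet> f')) *\<^sub>R \<beta> f f')"
    by simp
  also have "\<dots> = (\<Sum>(f, f')\<in>F \<times> F. (\<Sum>e\<in>E. (f \<bullet> e) * (e \<bullet> f')) *\<^sub>R \<beta> f f')"
    by (subst sum.swap) (simp add: split_def scaleR_sum_left inner_commute)
  also have "\<dots> = (\<Sum>(f, f')\<in>F \<times> F. if f = f' then \<beta> f f' else 0)"
    by (intro sum.cong refl)
      (auto simp: orthonormal_basis_of_sum_inner[OF E FS] orthonormal_basis_of_inner[OF F])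
  also have "\<dots> = (\<Sum>f\<in>F. \<beta> f f)"
    using finF by (simp add: sum.cartesian_product[symmetric])
  finally show ?thesis .
qed

lemma sum_norm2_basis_independent:
  fixes \<beta> :: "'a::real_inner \<Rightarrow> 'a \<Rightarrow> 'b::real_inner"
  assumes E: "orthonormal_basis_of E S" and F: "orthonormal_basis_of F S" and \<beta>: "bilinear \<beta>"
  shows "(\<Sum>e\<in>E. \<Sum>e'\<in>E. (norm (\<beta> e e'))\<^sup>2) = (\<Sum>f\<in>F. \<Sum>f'\<in>F. (norm (\<beta> f f'))\<^sup>2)"
proof -
  have left: "bilinear (\<lambda>x y. \<beta> x z \<bullet> \<beta> y z)" and right: "bilinear (\<lambda>x y. \<beta> z x \<bullet> \<beta> z y)" for z
    using \<beta> by (auto simp: bilinear_def linear_iff inner_add_left inner_add_right)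
  have "(\<Sum>e\<in>E. \<Sum>e'\<in>E. (norm (\<beta> e e'))\<^sup>2) = (\<Sum>e\<in>E. \<Sum>f'\<in>F. (norm (\<beta> e f'))\<^sup>2)"
    unfolding power2_norm_eq_inner by (intro sum.cong refl trace_basis_independent[OF E F right])
  also have "\<dots> = (\<Sum>f'\<in>F. \<Sum>e\<in>E. (norm (\<beta> e f'))\<^sup>2)" by (rule sum.swap)
  also have "\<dots> = (\<Sum>f'\<in>F. \<Sum>f\<in>F. (norm (\<beta> f f'))\<^sup>2)"
    unfolding power2_norm_eq_inner by (intro sum.cong refl trace_basis_independent[OF E F left])
  finally show ?thesis by (rule trans) (rule sum.swap)
qed

lemma hermitian_cs_linear: "is_hermitian_cs J \<Longrightarrow> linear J"
  by (simp add: is_hermitian_cs_def)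

lemma hermitian_cs_square: "is_hermitian_cs J \<Longrightarrow> J (J u) = - u"
  by (simp add: is_hermitian_cs_def)

lemma hermitian_cs_inner: "is_hermitian_cs J \<Longrightarrow> J u \<bullet> J v = u \<bullet> v"
  by (simp add: is_hermitian_cs_def)

lemma hermitian_cs_skew:
  assumes "is_hermitian_cs J"
  shows "J u \<bullet> v = - (u \<bullet> J v)"
proof -
  have "u \<bullet> J v = J u \<bullet> J (J v)" using hermitian_cs_inner[OF assms] by simp
  also have "\<dots> = - (J u \<bullet> v)" using hermitian_cs_square[OF assms] by simp
  finally show ?thesis by simp
qed

lemma hermitian_cs_inner_self:
  assumes "is_hermitian_cs J"
  shows "J u \<bullet> u = 0" "u \<bullet> J u = 0"
  using hermitian_cs_skew[OF assms, of u u] by (simp_all add: inner_commute)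

lemma hermitian_cs_norm2_combination:
  assumes "is_hermitian_cs J"
  shows "(norm (p *\<^sub>R W + q *\<^sub>R J W))\<^sup>2 = (p\<^sup>2 + q\<^sup>2) * (W \<bullet> W)"
  using hermitian_cs_inner[OF assms, of W W] hermitian_cs_inner_self[OF assms, of W]
  unfolding power2_norm_eq_inner
  by (simp add: inner_add_left inner_add_right power2_eq_square distrib_right)

section \<open>The Levi-Civita connection and the second fundamental form\<close>

lemma lc_conn_Pair:
  assumes "is_hermitian_cs J"
  shows "lc_conn J (a, U, x) (b, V, z) =
    ((U \<bullet> V) / 2 + x * z, (- 1 / 2) *\<^sub>R (b *\<^sub>R U + x *\<^sub>R J V + z *\<^sub>R J U), (J U \<bullet> V) / 2 - b * x)"
    (is "_ = ?L")
proof -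
  have koszul: "(an_bracket J (a, U, x) (b, V, z) \<bullet> E - an_bracket J (b, V, z) E \<bullet> (a, U, x)
      + an_bracket J E (a, U, x) \<bullet> (b, V, z)) / 2 = ?L \<bullet> E" for E
  proof -
    obtain c S w where E: "E = (c, S, w)" by (cases E) auto
    have "J S \<bullet> U = - (S \<bullet> J U)" by (rule hermitian_cs_skew[OF assms])
    then show ?thesis unfolding E an_bracket_def
      by (simp add: inner_add_left inner_add_right inner_diff_left inner_diff_right
          inner_commute[of V U] inner_commute[of S U] inner_commute[of S V]
          inner_commute[of "J U" S] inner_commute[of "J V" S] field_simps)
  qed
  show ?thesis unfolding lc_conn_def koszul by (rule euclidean_representation)
qed

lemma bilinear_lc_conn:
  assumes J: "is_hermitian_cs J"
  shows "bilinear (lc_conn J)"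
proof -
  interpret J: linear J by (rule hermitian_cs_linear[OF J])
  show ?thesis unfolding bilinear_def
  proof (intro allI conjI linearI)
    fix X Y Y' :: "'a san" and c :: real
    show "lc_conn J X (Y + Y') = lc_conn J X Y + lc_conn J X Y'"
      "lc_conn J X (c *\<^sub>R Y) = c *\<^sub>R lc_conn J X Y"
      "lc_conn J (Y + Y') X = lc_conn J Y X + lc_conn J Y' X"
      "lc_conn J (c *\<^sub>R Y) X = c *\<^sub>R lc_conn J Y X"
      by (cases X; cases Y; cases Y';
          simp add: lc_conn_Pair[OF J] J.add J.scale inner_add_left inner_add_right
            scaleR_add_right algebra_simps add_divide_distrib)+
  qed
qed

lemma bilinear_sff:
  assumes "is_hermitian_cs J" "finite E"
  shows "bilinear (sff J E)"
proof -
  have "linear (nproj E \<circ> lc_conn J X)" "linear (nproj E \<circ> (\<lambda>X. lc_conn J X Y))" for X Y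
    using bilinear_lc_conn[OF assms(1)] linear_nproj[OF assms(2)]
    unfolding bilinear_def by (blast intro: linear_compose)+
  then show ?thesis by (simp add: bilinear_def sff_def o_def)
qed

lemma mean_curv_basis_independent:
  assumes "is_hermitian_cs J" "orthonormal_basis_of E S" "orthonormal_basis_of F S"
  shows "mean_curv J E = mean_curv J F"
proof -
  have "finite F" using assms(3) by (simp add: orthonormal_basis_of_def)
  then show ?thesis
    unfolding mean_curv_def sff_def nproj_basis_independent[OF assms(2,3)]
    using trace_basis_independent[OF assms(2,3) bilinear_sff[OF assms(1)], of F]
    by (simp add: sff_def)
qed

lemma sff_norm2_basis_independent:
  assumes "is_hermitian_cs J" "orthonormal_basis_of E S" "orthonormal_basis_of F S"
  shows "sff_norm2 J E = sff_norm2 J F"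
proof -
  have "finite F" using assms(3) by (simp add: orthonormal_basis_of_def)
  then show ?thesis
    unfolding sff_norm2_def sff_def nproj_basis_independent[OF assms(2,3)]
    using sum_norm2_basis_independent[OF assms(2,3) bilinear_sff[OF assms(1)], of F]
    by (simp add: sff_def)
qed

section \<open>The tangent space of the orbit\<close>

lemma an_bracket_uminus_right: "an_bracket J X (- Y) = - an_bracket J X Y"
  by (cases X; cases Y) (simp add: an_bracket_def)

lemma an_bracket_zero_right: "an_bracket J X 0 = 0"
  by (cases X) (simp add: an_bracket_def zero_prod_def)

lemma Ad_exp_neg_nilpotent:
  assumes "an_bracket J xi (an_bracket J xi v) = 0"
  shows "Ad_exp_neg J xi v = v - an_bracket J xi v"
proof -
  define ad where "ad = (\<lambda>u. - an_bracket J xi u)"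
  have ad2: "(ad ^^ 2) v = 0"
    using assms by (simp add: ad_def numeral_2_eq_2 an_bracket_uminus_right)
  have "(ad ^^ k) v = 0" if "k \<ge> 2" for k
  proof -
    have "(ad ^^ m) 0 = 0" for m
      by (induction m) (simp_all add: ad_def an_bracket_zero_right)
    then show ?thesis
      using that ad2 by (metis funpow_add le_add_diff_inverse2 o_apply)
  qed
  then have "Ad_exp_neg J xi v = (\<Sum>k<2. (1 / fact k) *\<^sub>R (ad ^^ k) v)"
    unfolding Ad_exp_neg_def ad_def[symmetric] by (intro suminf_finite) auto
  then show ?thesis by (simp add: numeral_2_eq_2 ad_def)
qed

lemma orbit_tangent_a_plus:
  assumes J: "is_hermitian_cs J" and W: "\<And>u. u \<in> R \<Longrightarrow> W \<bullet> J u = 0"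
  shows "orbit_tangent J (lie_a_plus R) (2 *\<^sub>R (0, W, 0) + y *\<^sub>R an_Z J)
     = {(a, U + a *\<^sub>R W, a * y) | a U. U \<in> R}"
proof -
  interpret J: linear J by (rule hermitian_cs_linear[OF J])
  have xi: "2 *\<^sub>R (0, W, 0) + y *\<^sub>R an_Z J = (0, 2 *\<^sub>R W, y)"
    by (simp add: an_Z_def an_J_def an_B_def J.zero)
  have "Ad_exp_neg J (0, 2 *\<^sub>R W, y) (a, U, 0) = (a, U + a *\<^sub>R W, a * y)" if "U \<in> R" for a U
  proof -
    have "J W \<bullet> U = 0" using W[OF that] hermitian_cs_skew[OF J] by simp
    moreover have "J W \<bullet> W = 0" by (rule hermitian_cs_inner_self[OF J])
    ultimately show ?thesis
      by (subst Ad_exp_neg_nilpotent) (simp_all add: an_bracket_def J.scale zero_prod_def)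
  qed
  then show ?thesis
    unfolding orbit_tangent_def lie_a_plus_def xi by (auto simp: image_iff) force
qed

section \<open>An adapted orthonormal frame\<close>

lemma power2_norm_Pair3: "(norm (x :: real, V, z :: real))\<^sup>2 = x\<^sup>2 + (norm V)\<^sup>2 + z\<^sup>2"
  by (simp add: norm_Pair)

locale orbit_frame =
  fixes J :: "'v::euclidean_space \<Rightarrow> 'v" and R BR :: "'v set" and W :: 'v and y a :: real
  assumes hermitian: "is_hermitian_cs J"
    and totally_real: "\<And>u v. u \<in> R \<Longrightarrow> v \<in> R \<Longrightarrow> J u \<bullet> v = 0"
    and W_perp: "\<And>u. u \<in> R \<Longrightarrow> W \<bullet> u = 0" "\<And>u. u \<in> R \<Longrightarrow> W \<bullet> J u = 0"
    and BR_basis: "orthonormal_basis_of BR R"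
    and a_pos: "0 < a" and a_normalizes: "a\<^sup>2 * (1 + y\<^sup>2 + W \<bullet> W) = 1"
begin

interpretation J: linear J by (rule hermitian_cs_linear[OF hermitian])

text \<open>\<open>tB\<close> is the normalised image \<open>Ad(Exp(-\<xi>)) B\<close> of \<open>B\<close>.\<close>

definition tB :: "'v san" where "tB = (a, a *\<^sub>R W, a * y)"

definition embed :: "'v \<Rightarrow> 'v san" where "embed u = (0, u, 0)"

definition frame :: "'v san set" where "frame = insert tB (embed ` BR)"

lemma BR_subset: "u \<in> BR \<Longrightarrow> u \<in> R"
  using BR_basis by (auto simp: orthonormal_basis_of_def)

lemma BR_inner: "u \<in> BR \<Longrightarrow> v \<in> BR \<Longrightarrow> u \<bullet> v = (if u = v then 1 else 0)"
  by (rule orthonormal_basis_of_inner[OF BR_basis])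

lemma finite_BR: "finite BR"
  using BR_basis by (simp add: orthonormal_basis_of_def)

lemma inj_embed: "inj embed"
  by (auto simp: embed_def intro: injI)

lemma tB_notin_embed: "tB \<notin> embed ` BR"
  using a_pos by (auto simp: tB_def embed_def)

lemma sum_frame: "sum G frame = G tB + (\<Sum>u\<in>BR. G (embed u))"
  unfolding frame_def using finite_BR tB_notin_embed
  by (simp add: sum.reindex inj_on_def inj_embed[THEN inj_eq])

lemma finite_frame: "finite frame"
  using finite_BR by (simp add: frame_def)

lemma span_frame: "span frame = {(b, U + b *\<^sub>R W, b * y) | b U. U \<in> R}"
proof -
  have "linear embed" by (auto simp: embed_def intro: linearI)
  then have "span frame = {x. \<exists>k. x - k *\<^sub>R tB \<in> embed ` R}"
    using BR_basis unfolding frame_def span_insert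
    by (simp add: span_linear_image orthonormal_basis_of_def)
  also have "\<dots> = {(b, U + b *\<^sub>R W, b * y) | b U. U \<in> R}"
  proof (intro equalityI subsetI)
    fix x assume "x \<in> {x. \<exists>k. x - k *\<^sub>R tB \<in> embed ` R}"
    then obtain k U where "U \<in> R" "x - k *\<^sub>R tB = embed U" by blast
    then show "x \<in> {(b, U + b *\<^sub>R W, b * y) | b U. U \<in> R}"
      by (intro CollectI exI[of _ "k * a"] exI[of _ U])
        (auto simp: tB_def embed_def prod_eq_iff algebra_simps)
  next
    fix x assume "x \<in> {(b, U + b *\<^sub>R W, b * y) | b U. U \<in> R}"
    then obtain b U where "U \<in> R" "x = (b, U + b *\<^sub>R W, b * y)" by blast
    moreover have "x - (b / a) *\<^sub>R tB = embed U" using a_pos \<open>x = _\<close> by (simp add: tB_def embed_def)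
    ultimately show "x \<in> {x. \<exists>k. x - k *\<^sub>R tB \<in> embed ` R}" by blast
  qed
  finally show ?thesis .
qed

lemma frame_subset: "frame \<subseteq> {(b, U + b *\<^sub>R W, b * y) | b U. U \<in> R}"
  using span_frame span_superset by blast

lemma frame_orthonormal_basis:
  "orthonormal_basis_of frame {(b, U + b *\<^sub>R W, b * y) | b U. U \<in> R}"
  unfolding orthonormal_basis_of_def
proof (intro conjI ballI)
  show "finite frame" by (rule finite_frame)
  show "span frame = {(b, U + b *\<^sub>R W, b * y) | b U. U \<in> R}" by (rule span_frame)
  show "frame \<subseteq> {(b, U + b *\<^sub>R W, b * y) | b U. U \<in> R}" by (rule frame_subset)
  have "tB \<bullet> embed u = 0" if "u \<in> BR" for u
    using W_perp(1)[OF BR_subset[OF that]] by (simp add: tB_def embed_def)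
  then show "pairwise orthogonal frame"
    unfolding frame_def pairwise_insert using BR_inner
    by (auto simp: pairwise_def orthogonal_def embed_def inner_commute[of _ tB])
  fix e assume "e \<in> frame"
  moreover have "tB \<bullet> tB = 1"
    using a_normalizes by (simp add: tB_def power2_eq_square algebra_simps)
  ultimately show "norm e = 1"
    using BR_inner by (auto simp: frame_def norm_eq_1 embed_def)
qed

lemma nproj_frame: "nproj frame p = p - (p \<bullet> tB) *\<^sub>R tB - (\<Sum>u\<in>BR. (p \<bullet> embed u) *\<^sub>R embed u)"
  unfolding nproj_def sum_frame by (simp add: algebra_simps)

lemma nproj_frame_normal:
  assumes "p \<bullet> tB = 0" "\<And>u. u \<in> BR \<Longrightarrow> p \<bullet> embed u = 0"
  shows "nproj frame p = p"
  using assms by (simp add: nproj_frame)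

lemma JW_perp: "u \<in> R \<Longrightarrow> J W \<bullet> u = 0"
  using W_perp(2) hermitian_cs_skew[OF hermitian] by simp

lemma sff_tB_tB:
  "sff J frame tB tB = (a\<^sup>2 * (W \<bullet> W + 2 * y\<^sup>2) / 2, (- (a\<^sup>2 / 2)) *\<^sub>R W + (- (a\<^sup>2 * y)) *\<^sub>R J W, - (a\<^sup>2 * y))"
  (is "_ = ?N")
proof -
  have JWW: "J W \<bullet> W = 0" by (rule hermitian_cs_inner_self[OF hermitian])
  have "lc_conn J tB tB = ?N"
    by (simp add: tB_def lc_conn_Pair[OF hermitian] J.scale JWW power2_eq_square algebra_simps)
      (simp add: scaleR_add_left[symmetric])
  moreover have "?N \<bullet> tB = 0"
    by (simp add: tB_def JWW inner_diff_left power2_eq_square algebra_simps)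
  moreover have "?N \<bullet> embed u = 0" if "u \<in> BR" for u
    using W_perp(1)[OF BR_subset[OF that]] JW_perp[OF BR_subset[OF that]]
    by (simp add: embed_def inner_diff_left)
  ultimately show ?thesis by (simp add: sff_def nproj_frame_normal)
qed

lemma sff_embed_embed:
  assumes "u \<in> BR" "v \<in> BR"
  shows "sff J frame (embed u) (embed v)
    = (if u = v then ((1 - a\<^sup>2) / 2, (- (a\<^sup>2 / 2)) *\<^sub>R W, - (a\<^sup>2 * y / 2)) else 0)"
proof -
  have lc: "lc_conn J (embed u) (embed v) = (if u = v then (1 / 2, 0, 0) else 0)"
    using BR_inner[OF assms] totally_real[OF BR_subset[OF assms(1)] BR_subset[OF assms(2)]]
    by (simp add: embed_def lc_conn_Pair[OF hermitian] zero_prod_def)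
  have "(1 / 2, 0, 0) \<bullet> embed w = 0" for w by (simp add: embed_def)
  then have "nproj frame (1 / 2, 0, 0) = (1 / 2, 0, 0) - (a / 2) *\<^sub>R tB"
    by (simp add: nproj_frame tB_def)
  also have "\<dots> = ((1 - a\<^sup>2) / 2, (- (a\<^sup>2 / 2)) *\<^sub>R W, - (a\<^sup>2 * y / 2))"
    by (simp add: tB_def power2_eq_square diff_divide_distrib)
  finally show ?thesis
    using linear_0[OF linear_nproj[OF finite_frame]] by (simp add: sff_def lc)
qed

lemma sff_tB_embed:
  assumes "v \<in> BR"
  shows "sff J frame tB (embed v) = (0, (- (a * y / 2)) *\<^sub>R J v, 0)" (is "_ = ?N")
proof -
  have vR: "v \<in> R" by (rule BR_subset[OF assms])
  have "lc_conn J tB (embed v) = ?N"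
    using W_perp[OF vR] JW_perp[OF vR]
    by (simp add: tB_def embed_def lc_conn_Pair[OF hermitian] J.scale)
  moreover have "?N \<bullet> tB = 0"
    using W_perp(2)[OF vR] by (simp add: tB_def inner_commute[of "J v"])
  moreover have "?N \<bullet> embed u = 0" if "u \<in> BR" for u
    using totally_real[OF vR BR_subset[OF that]] by (simp add: embed_def)
  ultimately show ?thesis by (simp add: sff_def nproj_frame_normal)
qed

lemma sff_embed_tB:
  assumes "v \<in> BR"
  shows "sff J frame (embed v) tB = sff J frame tB (embed v)"
proof -
  interpret nproj: linear "nproj frame" by (rule linear_nproj[OF finite_frame])
  have vR: "v \<in> R" by (rule BR_subset[OF assms])
  define N where "N = (0::real, (- (a * y / 2)) *\<^sub>R J v, 0::real)"
  have "lc_conn J (embed v) tB = N - (a / 2) *\<^sub>R embed v"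
    using W_perp[OF vR] JW_perp[OF vR] hermitian_cs_skew[OF hermitian, of v W]
    by (simp add: N_def tB_def embed_def lc_conn_Pair[OF hermitian] J.scale inner_commute[of v]
        algebra_simps)
  then have "sff J frame (embed v) tB = nproj frame N - (a / 2) *\<^sub>R nproj frame (embed v)"
    by (simp add: sff_def nproj.diff nproj.scale)
  also have "nproj frame (embed v) = 0"
    using assms nproj_eq_0[OF frame_orthonormal_basis] frame_subset by (auto simp: frame_def)
  also have "nproj frame N = N"
    using W_perp(2)[OF vR] totally_real[OF vR BR_subset]
    by (intro nproj_frame_normal) (simp_all add: N_def tB_def embed_def inner_commute[of "J v"])
  finally show ?thesis by (simp add: sff_tB_embed[OF assms] N_def)
qed

lemma mean_curv_frame:
  "mean_curv J frame = (a\<^sup>2 * (W \<bullet> W + 2 * y\<^sup>2) / 2 + real (card BR) * (1 - a\<^sup>2) / 2,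
     (- (a\<^sup>2 * (1 + real (card BR)) / 2)) *\<^sub>R W + (- (a\<^sup>2 * y)) *\<^sub>R J W, - (a\<^sup>2 * y * (2 + real (card BR)) / 2))"
proof -
  have "(\<Sum>u\<in>BR. sff J frame (embed u) (embed u))
      = (\<Sum>u\<in>BR. ((1 - a\<^sup>2) / 2, (- (a\<^sup>2 / 2)) *\<^sub>R W, - (a\<^sup>2 * y / 2)))"
    by (intro sum.cong refl) (simp add: sff_embed_embed)
  then show ?thesis
    unfolding mean_curv_def sum_frame sff_tB_tB
    by (simp add: sum_constant_scaleR algebra_simps add_divide_distrib diff_divide_distrib)
qed

lemma norm_mean_curv_frame:
  "(norm (mean_curv J frame))\<^sup>2 = (a\<^sup>2 * (W \<bullet> W + 2 * y\<^sup>2) / 2 + real (card BR) * (1 - a\<^sup>2) / 2)\<^sup>2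
     + ((a\<^sup>2 * (1 + real (card BR)) / 2)\<^sup>2 + (a\<^sup>2 * y)\<^sup>2) * (W \<bullet> W) + (a\<^sup>2 * y * (2 + real (card BR)) / 2)\<^sup>2"
  unfolding mean_curv_frame power2_norm_Pair3 hermitian_cs_norm2_combination[OF hermitian]
  by simp

lemma sff_norm2_frame:
  "sff_norm2 J frame = (a\<^sup>2 * (W \<bullet> W + 2 * y\<^sup>2) / 2)\<^sup>2 + ((a\<^sup>2 / 2)\<^sup>2 + (a\<^sup>2 * y)\<^sup>2) * (W \<bullet> W)
     + (a\<^sup>2 * y)\<^sup>2 + real (card BR) * ((a * y)\<^sup>2 / 2 + ((1 - a\<^sup>2) / 2)\<^sup>2 + (a\<^sup>2 / 2)\<^sup>2 * (W \<bullet> W)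
     + (a\<^sup>2 * y / 2)\<^sup>2)"
proof -
  have normal: "(norm (sff J frame tB tB))\<^sup>2 = (a\<^sup>2 * (W \<bullet> W + 2 * y\<^sup>2) / 2)\<^sup>2
      + ((a\<^sup>2 / 2)\<^sup>2 + (a\<^sup>2 * y)\<^sup>2) * (W \<bullet> W) + (a\<^sup>2 * y)\<^sup>2"
    unfolding sff_tB_tB power2_norm_Pair3 hermitian_cs_norm2_combination[OF hermitian] by simp
  have mixed: "(norm (sff J frame tB (embed v)))\<^sup>2 = (a * y / 2)\<^sup>2" if "v \<in> BR" for v
  proof -
    have "(norm (J v))\<^sup>2 = 1"
      using BR_inner[OF that that] hermitian_cs_inner[OF hermitian, of v v]
      by (simp add: power2_norm_eq_inner)
    then show ?thesis
      by (simp add: sff_tB_embed[OF that] power2_norm_Pair3 power_divide power_mult_distrib)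
  qed
  have tangential: "(\<Sum>v\<in>BR. (norm (sff J frame (embed u) (embed v)))\<^sup>2)
      = ((1 - a\<^sup>2) / 2)\<^sup>2 + (a\<^sup>2 / 2)\<^sup>2 * (W \<bullet> W) + (a\<^sup>2 * y / 2)\<^sup>2" if "u \<in> BR" for u
  proof -
    have "(\<Sum>v\<in>BR. (norm (sff J frame (embed u) (embed v)))\<^sup>2)
        = (\<Sum>v\<in>BR. if u = v then (norm (sff J frame (embed u) (embed u)))\<^sup>2 else 0)"
      by (intro sum.cong refl) (simp add: sff_embed_embed that)
    also have "\<dots> = (norm (sff J frame (embed u) (embed u)))\<^sup>2"
      using that finite_BR by simp
    also have "\<dots> = ((1 - a\<^sup>2) / 2)\<^sup>2 + (a\<^sup>2 / 2)\<^sup>2 * (W \<bullet> W) + (a\<^sup>2 * y / 2)\<^sup>2"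
      by (simp add: sff_embed_embed[OF that that] power2_norm_Pair3 power_mult_distrib
          power_divide power2_norm_eq_inner[symmetric])
    finally show ?thesis .
  qed
  have "sff_norm2 J frame = (norm (sff J frame tB tB))\<^sup>2
      + (\<Sum>v\<in>BR. (norm (sff J frame tB (embed v)))\<^sup>2)
      + (\<Sum>u\<in>BR. (norm (sff J frame (embed u) tB))\<^sup>2
         + (\<Sum>v\<in>BR. (norm (sff J frame (embed u) (embed v)))\<^sup>2))"
    unfolding sff_norm2_def sum_frame by (simp add: sum.distrib)
  also have "\<dots> = (norm (sff J frame tB tB))\<^sup>2 + real (card BR) * ((a * y / 2)\<^sup>2)
      + real (card BR) * ((a * y / 2)\<^sup>2 + ((1 - a\<^sup>2) / 2)\<^sup>2 + (a\<^sup>2 / 2)\<^sup>2 * (W \<bullet> W) + (a\<^sup>2 * y / 2)\<^sup>2)"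
    by (simp add: mixed tangential sff_embed_tB)
  finally show ?thesis
    unfolding normal by (simp add: power_mult_distrib power_divide algebra_simps)
qed

lemma curvature_identities:
  "(norm (mean_curv J frame))\<^sup>2 - sff_norm2 J frame
     = real (card BR) * (1 + real (card BR)) * (y\<^sup>2 + (norm W)\<^sup>2) / (4 * (1 + y\<^sup>2 + (norm W)\<^sup>2))
   \<and> (real (card BR) + 1) * sff_norm2 J frame - (norm (mean_curv J frame))\<^sup>2
     = real (card BR) * y\<^sup>2 * ((3 + 2 * real (card BR)) * (1 + y\<^sup>2) + 2 * (3 + real (card BR)) * (norm W)\<^sup>2)
       / (4 * (1 + y\<^sup>2 + (norm W)\<^sup>2)\<^sup>2)"
proof -
  define c where "c = 1 + y\<^sup>2 + W \<bullet> W"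
  have "c \<noteq> 0" using a_normalizes by (auto simp: c_def)
  have a2: "a\<^sup>2 = 1 / c" and WW: "W \<bullet> W = c - 1 - y\<^sup>2" and nW: "(norm W)\<^sup>2 = c - 1 - y\<^sup>2"
    using a_normalizes \<open>c \<noteq> 0\<close> by (simp_all add: c_def field_simps power2_norm_eq_inner)
  show ?thesis
    unfolding norm_mean_curv_frame sff_norm2_frame power_mult_distrib[of a y] a2 WW nW
    using \<open>c \<noteq> 0\<close> by (simp add: field_simps power2_eq_square)
qed

end

theorem corollary4p4:
  fixes J :: "'v::euclidean_space \<Rightarrow> 'v" and R :: "'v set" and r :: nat
    and W :: 'v and y :: real and E :: "'v san set"
  assumes "is_hermitian_cs J"
    and "subspace R" and "dim R = r" and "\<forall>u\<in>R. \<forall>v\<in>R. J u \<bullet> v = 0"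
    and "\<forall>u\<in>R. W \<bullet> u = 0 \<and> W \<bullet> J u = 0"
    and "orthonormal_basis_of E
           (orbit_tangent J (lie_a_plus R) (2 *\<^sub>R (0, W, 0) + y *\<^sub>R an_Z J))"
  shows "(norm (mean_curv J E))\<^sup>2 - sff_norm2 J E
           = real r * (1 + real r) * (y\<^sup>2 + (norm W)\<^sup>2) / (4 * (1 + y\<^sup>2 + (norm W)\<^sup>2))
       \<and> (real r + 1) * sff_norm2 J E - (norm (mean_curv J E))\<^sup>2
           = real r * y\<^sup>2 * ((3 + 2 * real r) * (1 + y\<^sup>2) + 2 * (3 + real r) * (norm W)\<^sup>2)
             / (4 * (1 + y\<^sup>2 + (norm W)\<^sup>2)\<^sup>2)"
proof -
  obtain BR where "BR \<subseteq> R" "pairwise orthogonal BR" "\<And>x. x \<in> BR \<Longrightarrow> norm x = 1"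
    "independent BR" "card BR = dim R" "span BR = R"
    using orthonormal_basis_subspace[OF assms(2)] by blast
  then have BR: "orthonormal_basis_of BR R" and "card BR = r"
    using assms(3) by (auto simp: orthonormal_basis_of_def independent_imp_finite)
  define a where "a = 1 / sqrt (1 + y\<^sup>2 + W \<bullet> W)"
  have "0 < 1 + y\<^sup>2 + W \<bullet> W" by (simp add: add_pos_nonneg)
  then have "0 < a" "a\<^sup>2 * (1 + y\<^sup>2 + W \<bullet> W) = 1"
    by (simp_all add: a_def power_divide)
  then interpret orbit_frame J R BR W y a
    using assms(1,4,5) BR by unfold_locales auto
  have E: "orthonormal_basis_of E {(b, U + b *\<^sub>R W, b * y) | b U. U \<in> R}"
    using assms(6) orbit_tangent_a_plus[OF assms(1)] assms(5) by simp
  show ?thesis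
    unfolding mean_curv_basis_independent[OF assms(1) E frame_orthonormal_basis]
      sff_norm2_basis_independent[OF assms(1) E frame_orthonormal_basis]
    using curvature_identities unfolding \<open>card BR = r\<close> .
qed

end
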